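(* Let $S$ be a reflective numerical semigroup with $\mathrm{g}(S)=g\ge1$ and $\mathrm{m}(S)=a$. Let $q=\lfloor g/a\rfloor$ and $r=g-qa$. Then \[ \mathrm{PF}(S)=\{g-(r-1),\,g-(r-2),\dots,g-1\}\cup\{2g-r\}, \] and in particular the type of $S$ equals $r$.
   Context: A numerical semigroup is a submonoid $S$ of $(\mathbb{N}_0,+)$ with finite complement. Its set of gaps is $\mathrm{H}(S)=\mathbb{N}_0\setminus S$, its genus is $\mathrm{g}(S)=\#\mathrm{H}(S)$, and its multiplicity $\mathrm{m}(S)$ is the smallest positive element of $S$. The set of pseudo-Frobenius numbers is $\mathrm{PF}(S)=\{h\in\mathrm{H}(S): h+s\in S\text{ for all } 0\ne s\in S\}$, and the type of $S$ is $\#\mathrm{PF}(S)$. A numerical semigroup $S$ of genus $g\ge1$ is called reflective if for every $z\in\{0,1,\dots,g-1\}$ exactly one of $z$ and $z+g$ belongs to $S$. (When $S$ is reflective, $a\nmid g$, so $1\le r\le a-1$.) *)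

theory Defs
  imports Main
begin

definition numerical_semigroup :: "nat set \<Rightarrow> bool" where
  "numerical_semigroup S \<longleftrightarrow> 0 \<in> S \<and> (\<forall>x\<in>S. \<forall>y\<in>S. x + y \<in> S) \<and> finite (UNIV - S)"

definition gaps :: "nat set \<Rightarrow> nat set" where
  "gaps S = UNIV - S"

definition genus :: "nat set \<Rightarrow> nat" where
  "genus S = card (gaps S)"

definition multiplicity :: "nat set \<Rightarrow> nat" where
  "multiplicity S = (LEAST s. s \<in> S \<and> 0 < s)"

definition pseudo_frobenius :: "nat set \<Rightarrow> nat set" where
  "pseudo_frobenius S = {h \<in> gaps S. \<forall>s\<in>S. s \<noteq> 0 \<longrightarrow> h + s \<in> S}"

definition sg_type :: "nat set \<Rightarrow> nat" where
  "sg_type S = card (pseudo_frobenius S)"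

definition reflective :: "nat set \<Rightarrow> bool" where
  "reflective S \<longleftrightarrow> genus S \<ge> 1 \<and>
     (\<forall>z < genus S. (z \<in> S) \<noteq> (z + genus S \<in> S))"

end

theory Submission
  imports Defs
begin

text \<open>
  Reflection pairs each z < g with exactly one gap among z and z + g, which already accounts
  for all g gaps; hence every n \<ge> 2g lies in S, and S is closed under differences below g.
  The latter forces the elements below g to be exactly the multiples of the multiplicity a,
  so S is completely determined by a and g: the multiples of a below g, the n in [g, 2g)
  with a not dividing n - g, and everything from 2g on. For such a set the pseudo-Frobenius numbers
  can be read off directly, with r = g mod a: the gaps in (g - r, g) and the gap 2g - r.
\<close>

definition reflective_sg :: "nat \<Rightarrow> nat \<Rightarrow> nat set" where
  "reflective_sg a g =
     {n. (n < g \<and> a dvd n) \<or> (g \<le> n \<and> n < 2 * g \<and> \<not> a dvd (n - g)) \<or> 2 * g \<le> n}"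

lemma mem_reflective_sg:
  "n \<in> reflective_sg a g \<longleftrightarrow>
     (n < g \<and> a dvd n) \<or> (g \<le> n \<and> n < 2 * g \<and> \<not> a dvd (n - g)) \<or> 2 * g \<le> n"
  by (simp add: reflective_sg_def)

lemma dvd_less_imp_le_minus_mod:
  fixes a x g :: nat
  assumes "a dvd x" "x < g"
  shows "x \<le> g - g mod a"
proof (cases "a = 0")
  case False
  obtain k where x: "x = a * k" using assms(1) by blast
  have "a * k div a \<le> g div a" using x assms(2) by (intro div_le_mono) simp
  hence "a * k \<le> a * (g div a)" using False by simp
  thus ?thesis using x by (simp add: minus_mod_eq_mult_div)
qed (use assms in simp)

lemma dvd_eq_if_dist_less:
  fixes a x y :: nat
  assumes "a dvd x" "a dvd y" "x < y + a" "y < x + a"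
  shows "x = y"
proof (rule ccontr)
  assume "x \<noteq> y"
  then consider "x < y" | "y < x" by linarith
  thus False
  proof cases
    case 1
    hence "a dvd y - x" "0 < y - x" "y - x < a" using assms by (auto simp: dvd_diff_nat)
    thus False using dvd_imp_le by fastforce
  next
    case 2
    hence "a dvd x - y" "0 < x - y" "x - y < a" using assms by (auto simp: dvd_diff_nat)
    thus False using dvd_imp_le by fastforce
  qed
qed

lemma mem_pseudo_frobenius_iff:
  "h \<in> pseudo_frobenius S \<longleftrightarrow> h \<notin> S \<and> (\<forall>s\<in>S. s \<noteq> 0 \<longrightarrow> h + s \<in> S)"
  by (simp add: pseudo_frobenius_def gaps_def)

lemma multiplicity_le:
  assumes "s \<in> S" "0 < s"
  shows "multiplicity S \<le> s"
  using assms by (auto simp: multiplicity_def intro: Least_le)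

lemma numerical_semigroup_multiplicity:
  assumes "numerical_semigroup S"
  shows "multiplicity S \<in> S" "0 < multiplicity S"
proof -
  obtain k where "\<forall>n \<in> UNIV - S. n \<le> k"
    using assms finite_nat_set_iff_bounded_le by (auto simp: numerical_semigroup_def)
  hence "Suc k \<in> S \<and> 0 < Suc k" using Suc_n_not_le_n by blast
  hence "multiplicity S \<in> S \<and> 0 < multiplicity S"
    unfolding multiplicity_def by (rule LeastI)
  thus "multiplicity S \<in> S" "0 < multiplicity S" by auto
qed

lemma numerical_semigroup_mult_mem:
  assumes "numerical_semigroup S" "a \<in> S"
  shows "k * a \<in> S"
  using assms by (induction k) (auto simp: numerical_semigroup_def)

lemma reflective_ge_twice_genus_mem:
  assumes "numerical_semigroup S" "reflective S" "2 * genus S \<le> n"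
  shows "n \<in> S"
proof (rule ccontr)
  let ?g = "genus S"
  define f where "f z = (if z \<in> S then z + ?g else z)" for z
  have f_gaps: "f ` {..<?g} \<subseteq> gaps S \<inter> {..<2 * ?g}"
    using assms(2) by (auto simp: f_def gaps_def reflective_def)
  have "inj_on f {..<?g}"
    unfolding inj_on_def f_def by (auto split: if_splits)
  hence card_f: "card (f ` {..<?g}) = ?g" by (simp add: card_image)
  assume "n \<notin> S"
  hence "insert n (f ` {..<?g}) \<subseteq> gaps S" using f_gaps by (auto simp: gaps_def)
  moreover have "finite (gaps S)" using assms(1) by (simp add: numerical_semigroup_def gaps_def)
  ultimately have "card (insert n (f ` {..<?g})) \<le> ?g"
    by (metis card_mono genus_def)
  moreover have "n \<notin> f ` {..<?g}" using f_gaps assms(3) by auto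
  ultimately show False using card_f by simp
qed

lemma reflective_diff_mem:
  assumes "numerical_semigroup S" "reflective S"
    and "s \<in> S" "u \<in> S" "s \<le> u" "u < genus S"
  shows "u - s \<in> S"
proof (rule ccontr)
  have refl: "\<And>z. z < genus S \<Longrightarrow> (z \<in> S) \<noteq> (z + genus S \<in> S)"
    using assms(2) by (simp add: reflective_def)
  assume "u - s \<notin> S"
  hence "u - s + genus S \<in> S" using refl[of "u - s"] assms(6) by auto
  hence "u - s + genus S + s \<in> S" using assms(1,3) by (simp add: numerical_semigroup_def)
  hence "u + genus S \<in> S" using assms(5) by simp
  thus False using refl[of u] assms(4,6) by simp
qed

lemma reflective_mem_below_genus_iff:
  assumes "numerical_semigroup S" "reflective S" "n < genus S"
  shows "n \<in> S \<longleftrightarrow> multiplicity S dvd n"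
proof
  assume "multiplicity S dvd n"
  thus "n \<in> S"
    using numerical_semigroup_mult_mem[OF assms(1) numerical_semigroup_multiplicity(1)[OF assms(1)]]
    by (auto simp: mult.commute)
next
  let ?a = "multiplicity S"
  show "n \<in> S \<Longrightarrow> ?a dvd n" using assms(3)
  proof (induction n rule: less_induct)
    case (less n)
    show ?case
    proof (cases "n = 0")
      case False
      hence "?a \<le> n" using multiplicity_le less.prems(1) by simp
      hence "n - ?a \<in> S"
        using reflective_diff_mem[OF assms(1,2) numerical_semigroup_multiplicity(1)[OF assms(1)]]
          less.prems by simp
      hence "?a dvd n - ?a"
        using less.IH numerical_semigroup_multiplicity(2)[OF assms(1)] False less.prems(2) by simp
      thus ?thesis using \<open>?a \<le> n\<close> by (simp add: dvd_minus_self)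
    qed simp
  qed
qed

lemma reflective_eq_reflective_sg:
  assumes "numerical_semigroup S" "reflective S"
  shows "S = reflective_sg (multiplicity S) (genus S)"
proof (rule set_eqI)
  fix n
  let ?g = "genus S"
  consider "n < ?g" | "?g \<le> n" "n < 2 * ?g" | "2 * ?g \<le> n" by linarith
  thus "n \<in> S \<longleftrightarrow> n \<in> reflective_sg (multiplicity S) ?g"
  proof cases
    case 1
    thus ?thesis using reflective_mem_below_genus_iff[OF assms] by (simp add: mem_reflective_sg)
  next
    case 2
    hence "(n - ?g \<in> S) \<noteq> (n \<in> S)" using assms(2) by (auto simp: reflective_def)
    thus ?thesis using 2 reflective_mem_below_genus_iff[OF assms, of "n - ?g"]
      by (auto simp: mem_reflective_sg)
  next
    case 3
    thus ?thesis using reflective_ge_twice_genus_mem[OF assms] by (simp add: mem_reflective_sg)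
  qed
qed

lemma reflective_not_dvd_genus:
  assumes "numerical_semigroup S" "reflective S"
  shows "\<not> multiplicity S dvd genus S"
proof
  let ?a = "multiplicity S" and ?g = "genus S"
  assume dvd: "?a dvd ?g"
  have g_pos: "0 < ?g" using assms(2) by (simp add: reflective_def)
  have "0 \<in> S" using assms(1) by (simp add: numerical_semigroup_def)
  hence g_gap: "?g \<notin> S" using assms(2) g_pos by (auto simp: reflective_def)
  have a_pos: "0 < ?a" and a_mem: "?a \<in> S" using numerical_semigroup_multiplicity[OF assms(1)] by auto
  have "?a \<le> ?g" using dvd g_pos by (rule dvd_imp_le)
  moreover have "?a \<noteq> ?g" using a_mem g_gap by auto
  ultimately have "?a < ?g" by simp
  hence "?g - ?a \<in> S"
    using reflective_mem_below_genus_iff[OF assms, of "?g - ?a"] dvd a_pos by (simp add: dvd_diff_nat)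
  hence "?g - ?a + ?a \<in> S" using a_mem assms(1) by (simp add: numerical_semigroup_def)
  thus False using g_gap \<open>?a < ?g\<close> by simp
qed

context
  fixes a g :: nat
  assumes a_pos: "0 < a"
    and not_dvd: "\<not> a dvd g"
    and multiplicity_eq: "multiplicity (reflective_sg a g) = a"
begin

private abbreviation "r \<equiv> g mod a"

private lemma residue_props: "0 < r" "r < a" "r \<le> g" "a dvd g - r"
proof -
  show "0 < r" using not_dvd by (metis dvd_eq_mod_eq_0 gr0I)
  show "r < a" using a_pos by simp
  show "r \<le> g" by simp
  show "a dvd g - r" by (simp add: minus_mod_eq_mult_div)
qed

private lemma a_le_pos_mem: "s \<in> reflective_sg a g \<Longrightarrow> 0 < s \<Longrightarrow> a \<le> s"
  using multiplicity_le multiplicity_eq by metis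

private lemma a_mem_reflective_sg: "a \<in> reflective_sg a g"
proof -
  have "g \<noteq> 0" using not_dvd by (metis dvd_0_right)
  hence "2 * g \<in> reflective_sg a g \<and> 0 < 2 * g" by (simp add: mem_reflective_sg)
  hence "multiplicity (reflective_sg a g) \<in> reflective_sg a g"
    unfolding multiplicity_def by (rule LeastI2_ex[OF exI]) simp
  thus ?thesis using multiplicity_eq by simp
qed

lemma pseudo_frobenius_reflective_sg_cases:
  assumes "h \<in> pseudo_frobenius (reflective_sg a g)"
  shows "g - r < h \<and> h < g \<or> h = 2 * g - r"
proof -
  have gap: "h \<notin> reflective_sg a g"
    and add: "\<And>s. s \<in> reflective_sg a g \<Longrightarrow> s \<noteq> 0 \<Longrightarrow> h + s \<in> reflective_sg a g"
    using assms by (auto simp: mem_pseudo_frobenius_iff)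
  have "h < 2 * g" using gap mem_reflective_sg[of h a g] by linarith
  show ?thesis
  proof (cases "g \<le> h")
    case True
    hence dvd: "a dvd h - g" using gap \<open>h < 2 * g\<close> by (simp add: mem_reflective_sg)
    have "h + a \<in> reflective_sg a g" using add a_mem_reflective_sg a_pos by simp
    moreover have "h + a - g = (h - g) + a" using True by simp
    hence "a dvd h + a - g" using dvd by simp
    ultimately have "2 * g \<le> h + a" using True by (simp add: mem_reflective_sg)
    hence "h - g = g - r"
      using dvd_eq_if_dist_less[OF dvd residue_props(4)] \<open>h < 2 * g\<close> residue_props True by linarith
    thus ?thesis using True residue_props(3) by linarith
  next
    case False
    hence not_dvd_h: "\<not> a dvd h" using gap by (simp add: mem_reflective_sg)
    have "g - r < h"
    proof (rule ccontr)
      assume "\<not> g - r < h"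
      moreover have "h \<noteq> g - r" using not_dvd_h residue_props(4) by auto
      ultimately have h_less: "h < g - r" by simp
      \<comment> \<open>chosen so that h + s is the gap g + (g - r)\<close>
      define s where "s = g + (g - r - h)"
      have "\<not> a dvd g - r - h"
        using not_dvd_h residue_props(4) h_less by (metis diff_diff_cancel dvd_diff_nat less_imp_le)
      moreover have "s - g = g - r - h" "g \<le> s" "s < 2 * g"
        using h_less residue_props(1,3) by (auto simp: s_def)
      ultimately have "s \<in> reflective_sg a g" using mem_reflective_sg[of s a g] by simp
      hence "h + s \<in> reflective_sg a g" using add s_def not_dvd by (metis add_is_0 dvd_0_right)
      moreover have "h + s - g = g - r" "g \<le> h + s" "h + s < 2 * g"
        using s_def h_less residue_props(1,3) by auto
      ultimately show False using residue_props(4) mem_reflective_sg[of "h + s" a g] by simp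
    qed
    thus ?thesis using False by simp
  qed
qed

lemma mem_pseudo_frobenius_reflective_sg_interval:
  assumes "g - r < h" "h < g"
  shows "h \<in> pseudo_frobenius (reflective_sg a g)"
proof -
  have "h \<notin> reflective_sg a g"
    using dvd_less_imp_le_minus_mod[of a h g] assms by (auto simp: mem_reflective_sg)
  moreover have "h + s \<in> reflective_sg a g" if s: "s \<in> reflective_sg a g" "s \<noteq> 0" for s
  proof (cases "2 * g \<le> h + s")
    case False
    have "a \<le> s" using a_le_pos_mem s by simp
    hence "g \<le> h + s" using assms residue_props(2) by linarith
    have "\<not> a dvd h + s - g"
    proof
      assume dvd: "a dvd h + s - g"
      show False
      proof (cases "s < g")
        case True
        hence "a dvd s" using s by (simp add: mem_reflective_sg)
        hence "a dvd s - (h + s - g)" using dvd by (simp add: dvd_diff_nat)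
        moreover have "s - (h + s - g) = g - h" using assms \<open>g \<le> h + s\<close> by simp
        ultimately have "a \<le> g - h" using assms by (simp add: dvd_imp_le)
        thus False using assms residue_props(2) by linarith
      next
        case False
        have "h + s - g \<le> g - r"
          using dvd_less_imp_le_minus_mod[OF dvd, of g] \<open>\<not> 2 * g \<le> h + s\<close> by linarith
        thus False using False assms by linarith
      qed
    qed
    thus ?thesis using \<open>g \<le> h + s\<close> False by (simp add: mem_reflective_sg)
  qed (simp add: mem_reflective_sg)
  ultimately show ?thesis by (simp add: mem_pseudo_frobenius_iff)
qed

lemma twice_minus_mod_mem_pseudo_frobenius_reflective_sg:
  "2 * g - r \<in> pseudo_frobenius (reflective_sg a g)"
proof -
  have "g \<le> 2 * g - r" "2 * g - r < 2 * g" "2 * g - r - g = g - r"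
    using residue_props(1,3) by linarith+
  hence "2 * g - r \<notin> reflective_sg a g"
    using residue_props(4) mem_reflective_sg[of "2 * g - r" a g] by simp
  moreover have "2 * g \<le> 2 * g - r + s" if "s \<in> reflective_sg a g" "s \<noteq> 0" for s
    using a_le_pos_mem[of s] that residue_props(2,3) by simp
  ultimately show ?thesis by (auto simp: mem_pseudo_frobenius_iff mem_reflective_sg)
qed

lemma pseudo_frobenius_reflective_sg:
  "pseudo_frobenius (reflective_sg a g) = {g - g mod a <..< g} \<union> {2 * g - g mod a}"
  using pseudo_frobenius_reflective_sg_cases mem_pseudo_frobenius_reflective_sg_interval
    twice_minus_mod_mem_pseudo_frobenius_reflective_sg
  by (intro set_eqI) (metis Un_iff greaterThanLessThan_iff singleton_iff)

end

theorem mainTheorem7: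
  fixes S :: "nat set" and g a q r :: nat
  assumes "numerical_semigroup S"
    and "reflective S"
    and "genus S = g" and "g \<ge> 1"
    and "multiplicity S = a"
    and "q = g div a"
    and "r = g - q * a"
  shows "pseudo_frobenius S = {g - (r - 1) .. g - 1} \<union> {2 * g - r}
         \<and> sg_type S = r"
proof -
  have S_eq: "S = reflective_sg a g"
    using reflective_eq_reflective_sg[OF assms(1,2)] assms(3,5) by simp
  have "0 < a" using numerical_semigroup_multiplicity(2)[OF assms(1)] assms(5) by simp
  moreover have "\<not> a dvd g" using reflective_not_dvd_genus[OF assms(1,2)] assms(3,5) by simp
  moreover have "multiplicity (reflective_sg a g) = a" using S_eq assms(5) by simp
  ultimately have pf: "pseudo_frobenius S = {g - r <..< g} \<union> {2 * g - r}"
    and "0 < r"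
    using pseudo_frobenius_reflective_sg S_eq assms(6,7)
    by (simp_all add: minus_div_mult_eq_mod dvd_eq_mod_eq_0 gr0I)
  have "r \<le> g" using assms(7) by simp
  hence "{g - r <..< g} = {g - (r - 1) .. g - 1}" and "2 * g - r \<notin> {g - r <..< g}"
    using \<open>0 < r\<close> by auto
  thus ?thesis using pf \<open>0 < r\<close> \<open>r \<le> g\<close> by (simp add: sg_type_def)
qed

end
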